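(* Let $X_n$ be the value $m$ of an index occurrence $\underline m$ chosen uniformly at random among all index occurrences of a uniformly random plain $\lambda$-term of size $n$ (equivalently, the distribution with $\mathbb P(X_n=m)$ equal to the total number of occurrences of $\underline m$ over all plain terms of size $n$ divided by the total number of index occurrences over all plain terms of size $n$). Then for every $m\ge 0$, $\mathbb P(X_n=m)\to(1-\rho)\rho^m$ as $n\to\infty$, i.e. $X_n$ converges to a geometric law with parameter $\rho$.
   Context: Plain $\lambda$-terms in de Bruijn notation are generated by $T::=\underline{n}\mid \lambda T\mid (T\,T)$, with index $\underline n$ encoded as $\mathsf S^n\mathsf 0$. Size: $|\mathsf 0|=1$, $|\mathsf S\,\underline n|=|\underline n|+1$, $|M\,N|=|M|+|N|+1$, $|\lambda M|=|M|+1$. $\rho\approx 0.29559774$ is the positive real root of $z^3+z^2+3z-1$. *)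

theory Defs
  imports Complex_Main
begin

text \<open>Plain lambda-terms in de Bruijn notation: index \<open>Idx n\<close> stands for S^n 0.\<close>
datatype lterm = Idx nat | Lam lterm | App lterm lterm

fun lsize :: "lterm \<Rightarrow> nat" where
  "lsize (Idx n) = n + 1"
| "lsize (Lam M) = lsize M + 1"
| "lsize (App M N) = lsize M + lsize N + 1"

fun occ :: "nat \<Rightarrow> lterm \<Rightarrow> nat" where
  "occ m (Idx n) = (if n = m then 1 else 0)"
| "occ m (Lam M) = occ m M"
| "occ m (App M N) = occ m M + occ m N"

fun nidx :: "lterm \<Rightarrow> nat" where
  "nidx (Idx n) = 1"
| "nidx (Lam M) = nidx M"
| "nidx (App M N) = nidx M + nidx N"

definition probX :: "nat \<Rightarrow> nat \<Rightarrow> real" where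
  "probX n m = real (\<Sum>t\<in>{t. lsize t = n}. occ m t) / real (\<Sum>t\<in>{t. lsize t = n}. nidx t)"

definition rho :: real where
  "rho = (THE z. z > 0 \<and> z ^ 3 + z ^ 2 + 3 * z - 1 = 0)"

end

theory Submission
  imports Defs "HOL-Analysis.FPS_Convergence" "HOL-Real_Asymp.Real_Asymp"
begin

unbundle no vec_syntax
notation fps_nth (infixl \<open>$\<close> 75)

text \<open>
  Splitting a term at its root shows that, with \<open>T\<close> counting terms by size, the occurrences
  of the index \<open>m\<close> have generating function \<open>z^(m+1) C\<close> and all index occurrences have
  \<open>z/(1-z) C\<close>, where \<open>C = 1/(1 - z - 2zT)\<close> counts one-hole contexts. Hence
  \<open>P(X_(n+m+1) = m) = c_n / (c_0 + ... + c_(n+m))\<close>, and the geometric limit follows once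
  \<open>c_n / c_(n+1) \<longrightarrow> \<rho>\<close>.

  Eliminating \<open>T\<close> gives \<open>C^2 ((1-z)^3 - 4z^2) = 1 - z\<close>, and \<open>(1-\<rho>z)^3 - 4\<rho>^2z^2 = (1-z) Q(z)\<close>
  with \<open>Q\<close> zero-free on a disc of radius greater than 1. So \<open>C(\<rho>z) = (1-z)^(-1/2) \<beta>(z)\<close> with
  \<open>\<beta> = sqrt((1-\<rho>z)/Q)\<close>; a differential equation for \<open>\<beta>\<close> yields a recurrence bounding its
  coefficients by \<open>(9/20)^n\<close>. Tannery's theorem then gives
  \<open>\<rho>^n c_n \<sim> \<beta>(1) [z^n] (1-z)^(-1/2)\<close> with \<open>\<beta>(1) > 0\<close>, from which the ratio limit follows.
\<close>

section \<open>Limits of ratios and partial sums\<close>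

lemma ratio_shift_tendsto:
  fixes a :: "nat \<Rightarrow> real"
  assumes nz: "eventually (\<lambda>n. a n \<noteq> 0) sequentially"
    and ratio: "(\<lambda>n. a n / a (Suc n)) \<longlonglongrightarrow> r"
  shows "(\<lambda>n. a n / a (n + j)) \<longlonglongrightarrow> r ^ j"
proof (induction j)
  case 0
  have "eventually (\<lambda>n. a n / a (n + 0) = 1) sequentially"
    using nz by eventually_elim simp
  then show ?case
    by (simp add: tendsto_eventually)
next
  case (Suc j)
  have "(\<lambda>n. a n / a (n + j) * (a (n + j) / a (Suc (n + j)))) \<longlonglongrightarrow> r ^ j * r"
    using Suc LIMSEQ_ignore_initial_segment[OF ratio, of j] by (intro tendsto_mult) simp_all
  moreover have "eventually (\<lambda>n. a n / a (n + j) * (a (n + j) / a (Suc (n + j))) =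
      a n / a (n + Suc j)) sequentially"
    using eventually_all_ge_at_top[OF nz] by eventually_elim simp
  ultimately show ?case
    by (simp add: Lim_transform_eventually mult.commute)
qed

lemma convolution_quotient_tendsto:
  fixes a b :: "nat \<Rightarrow> real"
  assumes a_pos: "\<And>n. 0 < a n"
    and a_ratio: "(\<lambda>n. a n / a (Suc n)) \<longlonglongrightarrow> 1"
    and a_shift: "\<And>k n. k \<le> n \<Longrightarrow> a (n - k) \<le> c ^ k * a n"
    and b_summable: "summable (\<lambda>k. \<bar>b k\<bar> * c ^ k)"
  shows "(\<lambda>n. (\<Sum>k\<le>n. b k * a (n - k)) / a n) \<longlonglongrightarrow> suminf b"
proof -
  define A where "A k n = (if k \<le> n then b k * (a (n - k) / a n) else 0)" for k n
  have nz: "eventually (\<lambda>n. a n \<noteq> 0) sequentially"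
    using a_pos by (intro always_eventually) (simp add: less_imp_neq[symmetric])
  have "(\<lambda>n. A k n) \<longlonglongrightarrow> b k" for k
  proof -
    have "(\<lambda>n. a (n + k - k) / a (n + k)) \<longlonglongrightarrow> 1"
      using ratio_shift_tendsto[OF nz a_ratio, of k] by simp
    then have shift: "(\<lambda>n. a (n - k) / a n) \<longlonglongrightarrow> 1"
      by (rule LIMSEQ_offset)
    have "(\<lambda>n. b k * (a (n - k) / a n)) \<longlonglongrightarrow> b k"
      using tendsto_mult_left[OF shift, of "b k"] by simp
    moreover have "eventually (\<lambda>n. b k * (a (n - k) / a n) = A k n) sequentially"
      using eventually_ge_at_top[of k] by eventually_elim (simp add: A_def)
    ultimately show ?thesis
      by (rule Lim_transform_eventually)
  qed
  moreover have "norm (A k n) \<le> \<bar>b k\<bar> * c ^ k" for k n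
  proof (cases "k \<le> n")
    case True
    have "\<bar>a (n - k) / a n\<bar> \<le> c ^ k"
      using a_shift[OF True] a_pos[of n] a_pos[of "n - k"] by (simp add: divide_le_eq)
    then have "\<bar>b k\<bar> * \<bar>a (n - k) / a n\<bar> \<le> \<bar>b k\<bar> * c ^ k"
      by (rule mult_left_mono) simp
    then show ?thesis
      using True by (simp only: A_def if_True norm_mult real_norm_def abs_mult)
  next
    case False
    have "a 0 \<le> c ^ k * a k"
      using a_shift[of k k] by simp
    then have "0 < c ^ k"
      using a_pos[of 0] a_pos[of k] by (meson less_le_trans zero_less_mult_pos2)
    with False show ?thesis
      by (simp add: A_def)
  qed
  ultimately have "(\<lambda>n. suminf (\<lambda>k. A k n)) \<longlonglongrightarrow> suminf b"
    using tannerys_theorem[of A b sequentially "\<lambda>k. \<bar>b k\<bar> * c ^ k", OF _ always_eventually]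
      b_summable by simp
  moreover have "suminf (\<lambda>k. A k n) = (\<Sum>k\<le>n. b k * a (n - k)) / a n" for n
    by (subst suminf_finite[of "{..n}"]) (auto simp: A_def sum_divide_distrib)
  ultimately show ?thesis
    by simp
qed

lemma quotient_ratio_tendsto:
  fixes g a :: "nat \<Rightarrow> real"
  assumes g: "(\<lambda>n. g n / a n) \<longlonglongrightarrow> L" and "L \<noteq> 0"
    and a_nz: "\<And>n. a n \<noteq> 0" and a_ratio: "(\<lambda>n. a n / a (Suc n)) \<longlonglongrightarrow> r"
  shows "(\<lambda>n. g n / g (Suc n)) \<longlonglongrightarrow> r"
proof -
  have "(\<lambda>n. g n / a n * (a n / a (Suc n)) / (g (Suc n) / a (Suc n))) \<longlonglongrightarrow> L * r / L"
    using \<open>L \<noteq> 0\<close> by (intro tendsto_intros g a_ratio LIMSEQ_Suc[OF g])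
  moreover have "(\<lambda>n. g n / a n * (a n / a (Suc n)) / (g (Suc n) / a (Suc n))) =
      (\<lambda>n. g n / g (Suc n))"
  proof (rule ext)
    fix n
    show "g n / a n * (a n / a (Suc n)) / (g (Suc n) / a (Suc n)) = g n / g (Suc n)"
      using a_nz[of n] a_nz[of "Suc n"] by (cases "g (Suc n) = 0") (simp_all add: field_simps)
  qed
  ultimately show ?thesis
    using \<open>L \<noteq> 0\<close> by simp
qed

lemma LIMSEQ_zero_if_contracting:
  fixes e \<delta> :: "nat \<Rightarrow> real"
  assumes step: "eventually (\<lambda>n. \<bar>e (Suc n)\<bar> \<le> \<theta> * \<bar>e n\<bar> + \<delta> n) sequentially"
    and \<delta>: "\<delta> \<longlonglongrightarrow> 0" and \<theta>: "0 \<le> \<theta>" "\<theta> < 1"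
  shows "e \<longlonglongrightarrow> 0"
proof (rule LIMSEQ_I)
  fix r :: real
  assume "0 < r"
  then have "eventually (\<lambda>n. \<bar>e (Suc n)\<bar> \<le> \<theta> * \<bar>e n\<bar> + \<delta> n \<and>
      \<delta> n < r * (1 - \<theta>) / 2) sequentially"
    using step order_tendstoD(2)[OF \<delta>, of "r * (1 - \<theta>) / 2"] \<theta> by (auto elim: eventually_conj)
  then obtain M where M: "\<And>n. n \<ge> M \<Longrightarrow>
      \<bar>e (Suc n)\<bar> \<le> \<theta> * \<bar>e n\<bar> + \<delta> n \<and> \<delta> n < r * (1 - \<theta>) / 2"
    by (auto simp: eventually_sequentially)
  have bound: "\<bar>e (M + k)\<bar> \<le> \<theta>^k * \<bar>e M\<bar> + r / 2" for k
  proof (induction k)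
    case (Suc k)
    have "\<bar>e (M + Suc k)\<bar> \<le> \<theta> * \<bar>e (M + k)\<bar> + r * (1 - \<theta>) / 2"
      using M[of "M + k"] by simp
    also have "\<dots> \<le> \<theta> * (\<theta>^k * \<bar>e M\<bar> + r / 2) + r * (1 - \<theta>) / 2"
      using Suc \<theta> by (simp add: mult_left_mono)
    finally show ?case
      by (simp add: field_simps)
  qed (use \<open>0 < r\<close> in simp)
  have "(\<lambda>k. \<theta>^k * \<bar>e M\<bar>) \<longlonglongrightarrow> 0"
    using \<theta> by (intro tendsto_mult_left_zero LIMSEQ_power_zero) simp
  then obtain K where K: "\<And>k. k \<ge> K \<Longrightarrow> \<theta>^k * \<bar>e M\<bar> < r / 2"
    using order_tendstoD(2)[of _ 0 sequentially "r / 2"] \<open>0 < r\<close>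
    by (auto simp: eventually_sequentially)
  show "\<exists>N. \<forall>n\<ge>N. norm (e n - 0) < r"
  proof (intro exI allI impI)
    fix n
    assume "M + K \<le> n"
    then have "K \<le> n - M" and "M + (n - M) = n"
      by simp_all
    then show "norm (e n - 0) < r"
      using bound[of "n - M"] K[of "n - M"] by simp
  qed
qed

lemma partial_sum_quotient_tendsto:
  fixes C :: "nat \<Rightarrow> real"
  assumes pos: "eventually (\<lambda>n. C n > 0) sequentially"
    and ratio: "(\<lambda>n. C n / C (Suc n)) \<longlonglongrightarrow> \<rho>" and \<rho>: "0 \<le> \<rho>" "\<rho> < 1"
  shows "(\<lambda>n. (\<Sum>k\<le>n. C k) / C n) \<longlonglongrightarrow> 1 / (1 - \<rho>)"
proof -
  define l where "l = 1 / (1 - \<rho>)"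
  define x where "x n = (\<Sum>k\<le>n. C k) / C n" for n
  define r where "r n = C n / C (Suc n)" for n
  define \<theta> where "\<theta> = (1 + \<rho>) / 2"
  have \<theta>: "0 \<le> \<theta>" "\<theta> < 1" "\<rho> < \<theta>"
    using \<rho> by (auto simp: \<theta>_def)
  have "eventually (\<lambda>n. \<bar>x (Suc n) - l\<bar> \<le> \<theta> * \<bar>x n - l\<bar> + \<bar>r n - \<rho>\<bar> * l) sequentially"
    using order_tendstoD(2)[OF ratio \<theta>(3)] eventually_all_ge_at_top[OF pos]
  proof eventually_elim
    case (elim n)
    then have "C n > 0" "C (Suc n) > 0" "0 < r n" "r n < \<theta>"
      by (auto simp: r_def)
    then have "x (Suc n) = 1 + r n * x n"
      by (simp add: x_def r_def field_simps)
    moreover have "l * (1 - \<rho>) = 1"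
      using \<rho> by (simp add: l_def)
    ultimately have "x (Suc n) - l = r n * (x n - l) + (r n - \<rho>) * l"
      by algebra
    also have "\<bar>\<dots>\<bar> \<le> \<theta> * \<bar>x n - l\<bar> + \<bar>r n - \<rho>\<bar> * l"
      using \<open>0 < r n\<close> \<open>r n < \<theta>\<close> \<rho>
      by (intro order_trans[OF abs_triangle_ineq] add_mono)
        (auto simp: abs_mult l_def intro!: mult_right_mono)
    finally show ?case .
  qed
  moreover have "(\<lambda>n. \<bar>r n - \<rho>\<bar> * l) \<longlonglongrightarrow> 0"
    using tendsto_mult_left_zero[OF tendsto_rabs_zero[OF LIM_zero[OF ratio]], of l]
    by (simp add: r_def mult.commute)
  ultimately have "(\<lambda>n. x n - l) \<longlonglongrightarrow> 0"
    using \<theta>(1,2) by (rule LIMSEQ_zero_if_contracting)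
  then show ?thesis
    by (simp add: LIM_zero_iff x_def l_def)
qed

lemma geometric_share_tendsto:
  fixes C :: "nat \<Rightarrow> real"
  assumes pos: "eventually (\<lambda>n. C n > 0) sequentially"
    and ratio: "(\<lambda>n. C n / C (Suc n)) \<longlonglongrightarrow> \<rho>" and \<rho>: "0 < \<rho>" "\<rho> < 1"
  shows "(\<lambda>n. C n / (\<Sum>k\<le>n + m. C k)) \<longlonglongrightarrow> (1 - \<rho>) * \<rho> ^ m"
proof -
  have "(\<lambda>n. (C n / C (n + m)) / ((\<Sum>k\<le>n + m. C k) / C (n + m))) \<longlonglongrightarrow> \<rho> ^ m / (1 / (1 - \<rho>))"
    using \<rho> pos by (intro tendsto_divide ratio_shift_tendsto[OF _ ratio] LIMSEQ_ignore_initial_segment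
        partial_sum_quotient_tendsto[OF pos ratio]) (auto elim: eventually_mono)
  moreover have "eventually (\<lambda>n. (C n / C (n + m)) / ((\<Sum>k\<le>n + m. C k) / C (n + m)) =
      C n / (\<Sum>k\<le>n + m. C k)) sequentially"
    using eventually_all_ge_at_top[OF pos]
  proof eventually_elim
    case (elim n)
    then have "C (n + m) \<noteq> 0"
      by (metis le_add1 less_irrefl)
    then show ?case
      by simp
  qed
  ultimately have "(\<lambda>n. C n / (\<Sum>k\<le>n + m. C k)) \<longlonglongrightarrow> \<rho> ^ m / (1 / (1 - \<rho>))"
    by (rule Lim_transform_eventually)
  then show ?thesis
    by (simp add: mult.commute)
qed

lemma abs_diff_mult_le:
  fixes x :: "'a::linordered_idom"
  assumes "0 \<le> x" "\<bar>e\<bar> \<le> E" "\<bar>d\<bar> \<le> D"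
  shows "\<bar>e - d * x\<bar> \<le> E + D * x"
proof -
  have "\<bar>d * x\<bar> \<le> D * x"
    using assms by (simp add: abs_mult mult_right_mono)
  then show ?thesis
    using abs_triangle_ineq4[of e "d * x"] assms(2) by linarith
qed

section \<open>Formal power series\<close>

lemma fps_const_X_power_mult_nth:
  "(fps_const (c :: 'a::comm_ring_1) * fps_X ^ k * F) $ n = (if n < k then 0 else c * F $ (n - k))"
  by (simp add: mult.assoc fps_X_power_mult_nth)

lemma fps_linear_ode_zero:
  fixes V :: "'a::field_char_0 fps"
  assumes ode: "(1 - fps_const c * fps_X) * fps_deriv V = fps_const d * V" and "V $ 0 = 0"
  shows "V = 0"
proof -
  have rec: "of_nat (Suc n) * V $ Suc n = (d + c * of_nat n) * V $ n" for n
  proof (cases n)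
    case 0
    then show ?thesis
      using arg_cong[OF ode, of "\<lambda>f. f $ 0"] by simp
  next
    case Suc
    then show ?thesis
      using arg_cong[OF ode, of "\<lambda>f. f $ n"] by (simp add: algebra_simps)
  qed
  have "V $ n = 0" for n
  proof (induction n)
    case (Suc n)
    then have "of_nat (Suc n) * V $ Suc n = 0"
      using rec[of n] by simp
    then show ?case
      by (simp del: of_nat_Suc)
  qed (fact \<open>V $ 0 = 0\<close>)
  then show ?thesis
    by (simp add: fps_eq_iff)
qed

definition invsqrt_fps :: "real fps" where
  "invsqrt_fps = fps_binomial (-1/2) oo (- fps_X)"

lemma invsqrt_fps_nth: "invsqrt_fps $ n = (real n - 1/2) gchoose n"
proof -
  have "(- (1/2) gchoose n) = (-1)^n * ((real n - 1/2) gchoose n)"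
    by (simp add: gbinomial_minus[of "1/2 :: real"] algebra_simps)
  then show ?thesis
    by (simp add: invsqrt_fps_def fps_compose_uminus')
qed

lemma invsqrt_fps_nth_Suc:
  "invsqrt_fps $ Suc n = invsqrt_fps $ n * (2 * real n + 1) / (2 * real n + 2)"
  using gbinomial_rec[of "real n - 1/2" n]
  by (simp add: invsqrt_fps_nth field_simps)

lemma invsqrt_fps_nth_pos: "invsqrt_fps $ n > 0"
  by (induction n) (simp_all add: invsqrt_fps_nth_Suc, simp add: invsqrt_fps_nth)

lemma invsqrt_fps_square: "invsqrt_fps^2 * (1 - fps_X) = 1"
proof -
  have "fps_binomial (-1/2)^2 * fps_binomial 1 = (1 :: real fps)"
    by (simp add: fps_binomial_power flip: fps_binomial_add_mult)
  then have "(fps_binomial (-1/2)^2 * fps_binomial 1) oo (- fps_X) = (1 :: real fps)"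
    by simp
  then show ?thesis
    by (simp add: invsqrt_fps_def fps_compose_mult_distrib fps_compose_power fps_binomial_1
        fps_compose_add_distrib)
qed

lemma invsqrt_fps_ratio: "(\<lambda>n. invsqrt_fps $ n / invsqrt_fps $ Suc n) \<longlonglongrightarrow> 1"
proof -
  have "invsqrt_fps $ n / invsqrt_fps $ Suc n = (2 * real n + 2) / (2 * real n + 1)" for n
    using invsqrt_fps_nth_pos[of n] by (simp add: invsqrt_fps_nth_Suc divide_simps)
  moreover have "(\<lambda>n. (2 * real n + 2) / (2 * real n + 1)) \<longlonglongrightarrow> 1"
    by real_asymp
  ultimately show ?thesis
    by simp
qed

lemma invsqrt_fps_shift_le: "k \<le> n \<Longrightarrow> invsqrt_fps $ (n - k) \<le> 2 ^ k * invsqrt_fps $ n"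
proof (induction k)
  case (Suc k)
  have "invsqrt_fps $ (n - Suc k) \<le> 2 * invsqrt_fps $ Suc (n - Suc k)"
    using invsqrt_fps_nth_pos[of "n - Suc k"]
    by (simp add: invsqrt_fps_nth_Suc field_simps)
  also have "Suc (n - Suc k) = n - k"
    using Suc.prems by simp
  finally show ?case
    using Suc by simp
qed simp

section \<open>Generating functions of plain terms\<close>

definition terms_of_size :: "nat \<Rightarrow> lterm set" where
  "terms_of_size n = {t. lsize t = n}"

lemma lsize_pos: "lsize t > 0"
  by (induction t) auto

lemma terms_of_size_0 [simp]: "terms_of_size 0 = {}"
  using lsize_pos by (auto simp: terms_of_size_def)

lemma terms_of_size_Suc:
  "terms_of_size (Suc n) = insert (Idx n) (Lam ` terms_of_size n \<union>
     (\<Union>i\<le>n. case_prod App ` (terms_of_size i \<times> terms_of_size (n - i))))"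
proof (rule set_eqI)
  fix t
  show "t \<in> terms_of_size (Suc n) \<longleftrightarrow> t \<in> insert (Idx n) (Lam ` terms_of_size n \<union>
     (\<Union>i\<le>n. case_prod App ` (terms_of_size i \<times> terms_of_size (n - i))))"
    by (cases t) (force simp: terms_of_size_def)+
qed

lemma finite_terms_of_size [simp]: "finite (terms_of_size n)"
proof (induction n rule: less_induct)
  case (less n)
  then show ?case
    by (cases n) (auto simp: terms_of_size_Suc)
qed

lemma sum_terms_of_size_Suc:
  fixes f :: "lterm \<Rightarrow> 'a::comm_monoid_add"
  shows "sum f (terms_of_size (Suc n)) = f (Idx n) + (\<Sum>t\<in>terms_of_size n. f (Lam t)) +
     (\<Sum>i\<le>n. \<Sum>a\<in>terms_of_size i. \<Sum>b\<in>terms_of_size (n - i). f (App a b))"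
proof -
  let ?A = "\<lambda>i. case_prod App ` (terms_of_size i \<times> terms_of_size (n - i))"
  have inj_App: "inj_on (case_prod App) A" for A
    by (auto simp: inj_on_def)
  have "sum f (\<Union>i\<le>n. ?A i) = (\<Sum>i\<le>n. sum f (?A i))"
    by (rule sum.UNION_disjoint) (simp, simp, auto simp: terms_of_size_def)
  also have "\<dots> = (\<Sum>i\<le>n. \<Sum>a\<in>terms_of_size i. \<Sum>b\<in>terms_of_size (n - i). f (App a b))"
    by (rule sum.cong[OF refl], subst sum.reindex[OF inj_App]) (simp add: sum.cartesian_product split_def)
  moreover have "sum f (Lam ` terms_of_size n) = (\<Sum>t\<in>terms_of_size n. f (Lam t))"
    by (simp add: sum.reindex inj_on_def)
  ultimately show ?thesis
    unfolding terms_of_size_Suc by (subst sum.insert sum.union_disjoint; auto simp: add.assoc)+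
qed

definition weight_gf :: "(lterm \<Rightarrow> nat) \<Rightarrow> real fps" where
  "weight_gf w = Abs_fps (\<lambda>n. real (\<Sum>t\<in>terms_of_size n. w t))"

definition leaf_gf :: "(lterm \<Rightarrow> nat) \<Rightarrow> real fps" where
  "leaf_gf w = Abs_fps (\<lambda>n. if n = 0 then 0 else real (w (Idx (n - 1))))"

definition index_gf :: "real fps" where
  "index_gf = Abs_fps (\<lambda>n. if n = 0 then 0 else 1)"

definition term_gf :: "real fps" where
  "term_gf = weight_gf (\<lambda>_. 1)"

lemma term_gf_eq: "term_gf = index_gf + fps_X * term_gf + fps_X * term_gf^2"
proof (rule fps_ext)
  fix n
  show "term_gf $ n = (index_gf + fps_X * term_gf + fps_X * term_gf^2) $ n"
  proof (cases n)
    case (Suc k)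
    have "term_gf $ Suc k = 1 + term_gf $ k + (\<Sum>i\<le>k. term_gf $ i * term_gf $ (k - i))"
      unfolding term_gf_def weight_gf_def fps_nth_Abs_fps sum_terms_of_size_Suc by simp
    then show ?thesis
      by (simp add: Suc index_gf_def fps_square_nth)
  qed (simp add: term_gf_def weight_gf_def index_gf_def)
qed

lemma weight_gf_additive_eq:
  assumes Lam: "\<And>t. w (Lam t) = w t" and App: "\<And>a b. w (App a b) = w a + w b"
  shows "weight_gf w = leaf_gf w + fps_X * weight_gf w + 2 * fps_X * term_gf * weight_gf w"
proof -
  let ?F = "weight_gf w" and ?T = "term_gf"
  have "?F = leaf_gf w + fps_X * ?F + fps_X * (?F * ?T + ?T * ?F)"
  proof (rule fps_ext)
    fix n
    show "?F $ n = (leaf_gf w + fps_X * ?F + fps_X * (?F * ?T + ?T * ?F)) $ n"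
    proof (cases n)
      case (Suc k)
      have "(?F * ?T + ?T * ?F) $ k = (\<Sum>i\<le>k. ?F $ i * ?T $ (k - i) + ?T $ i * ?F $ (k - i))"
        by (simp only: fps_add_nth fps_mult_nth atLeast0AtMost sum.distrib)
      then show ?thesis
        by (simp add: Suc weight_gf_def leaf_gf_def term_gf_def sum_terms_of_size_Suc Lam App
            sum.distrib sum_distrib_left sum_distrib_right mult_ac)
    qed (simp add: weight_gf_def leaf_gf_def)
  qed
  then show ?thesis
    by (simp add: algebra_simps)
qed

text \<open>\<open>hole_gf\<close> counts one-hole contexts: a path from the root to a leaf through
  \<open>Lam\<close> nodes and \<open>App\<close> nodes, each \<open>App\<close> carrying a sibling term on the left or right.\<close>

definition hole_gf :: "real fps" where
  "hole_gf = inverse (1 - fps_X - 2 * fps_X * term_gf)"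

lemma hole_gf_mult_inverse: "hole_gf * (1 - fps_X - 2 * fps_X * term_gf) = 1"
  unfolding hole_gf_def by (rule inverse_mult_eq_1) simp

lemma weight_gf_additive:
  assumes "\<And>t. w (Lam t) = w t" and "\<And>a b. w (App a b) = w a + w b"
  shows "weight_gf w = leaf_gf w * hole_gf"
proof -
  let ?D = "1 - fps_X - 2 * fps_X * term_gf"
  have "weight_gf w * ?D = leaf_gf w"
    using weight_gf_additive_eq[OF assms] by algebra
  then show ?thesis
    using hole_gf_mult_inverse by (metis mult.assoc mult.commute mult.right_neutral)
qed

lemma weight_gf_occ: "weight_gf (occ m) = fps_X ^ Suc m * hole_gf"
proof -
  have "leaf_gf (occ m) = fps_X ^ Suc m"
    by (rule fps_ext) (simp add: leaf_gf_def fps_X_power_nth)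
  then show ?thesis
    by (simp add: weight_gf_additive)
qed

lemma one_minus_X_mult_index_gf: "(1 - fps_X) * index_gf = fps_X"
  by (rule fps_ext) (auto simp: index_gf_def algebra_simps fps_X_nth)

lemma weight_gf_nidx: "(1 - fps_X) * weight_gf nidx = fps_X * hole_gf"
proof -
  have "leaf_gf nidx = index_gf"
    by (rule fps_ext) (simp add: leaf_gf_def index_gf_def)
  then show ?thesis
    by (simp add: weight_gf_additive mult.assoc [symmetric] one_minus_X_mult_index_gf)
qed

lemma hole_gf_square: "hole_gf^2 * ((1 - fps_X)^3 - 4 * fps_X^2) = 1 - fps_X"
proof -
  let ?T = term_gf and ?D = "1 - fps_X - 2 * fps_X * term_gf"
  have "(1 - fps_X) * ?D^2 =
      (1 - fps_X)^3 - 4 * fps_X * ((1 - fps_X) * (?T - fps_X * ?T - fps_X * ?T^2))"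
    by algebra
  also have "?T - fps_X * ?T - fps_X * ?T^2 = index_gf"
    using term_gf_eq by algebra
  also have "(1 - fps_X) * index_gf = fps_X"
    by (rule one_minus_X_mult_index_gf)
  finally have D: "(1 - fps_X) * ?D^2 = (1 - fps_X)^3 - 4 * fps_X^2"
    by (simp only: power2_eq_square mult.assoc)
  have "hole_gf^2 * ((1 - fps_X)^3 - 4 * fps_X^2) = (hole_gf * ?D)^2 * (1 - fps_X)"
    unfolding D[symmetric] by algebra
  then show ?thesis
    by (simp only: hole_gf_mult_inverse power_one mult_1_left)
qed

lemma hole_gf_nth_nonneg: "hole_gf $ n \<ge> 0"
proof -
  have "hole_gf $ n = weight_gf (occ 0) $ Suc n"
    by (simp add: weight_gf_occ)
  then show ?thesis
    by (simp add: weight_gf_def sum_nonneg)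
qed

lemma weight_gf_nidx_nth: "weight_gf nidx $ n = (\<Sum>k<n. hole_gf $ k)"
proof (induction n)
  case (Suc n)
  have "weight_gf nidx $ Suc n - weight_gf nidx $ n = hole_gf $ n"
    using arg_cong[OF weight_gf_nidx, of "\<lambda>f. f $ Suc n"] by (simp add: algebra_simps)
  with Suc show ?case
    by simp
qed (simp add: weight_gf_def)

lemma probX_eq_hole_gf: "probX (Suc (n + m)) m = hole_gf $ n / (\<Sum>k\<le>n + m. hole_gf $ k)"
proof -
  have "probX (Suc (n + m)) m = weight_gf (occ m) $ Suc (n + m) / weight_gf nidx $ Suc (n + m)"
    by (simp add: probX_def weight_gf_def terms_of_size_def)
  moreover have "weight_gf (occ m) $ Suc (n + m) = hole_gf $ n"
    by (simp only: weight_gf_occ fps_X_power_mult_nth) simp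
  ultimately show ?thesis
    by (simp only: weight_gf_nidx_nth lessThan_Suc_atMost)
qed

section \<open>The dominant singularity\<close>

lemma cubic_strict_mono:
  fixes x y :: real
  assumes "0 < x" "x < y"
  shows "x^3 + x^2 + 3*x < y^3 + y^2 + 3*y"
proof -
  have "x^3 < y^3" "x^2 < y^2"
    using assms by (auto intro: power_strict_mono)
  with assms show ?thesis
    by linarith
qed

lemma rho_bounds_and_root:
  "29/100 \<le> rho \<and> rho \<le> 3/10 \<and> rho^3 + rho^2 + 3*rho - 1 = 0"
proof -
  obtain x :: real where x: "29/100 \<le> x" "x \<le> 3/10" "x^3 + x^2 + 3*x - 1 = 0"
    using IVT'[of "\<lambda>x::real. x^3 + x^2 + 3*x - 1" "29/100" 0 "3/10"]
    by (force intro!: continuous_intros simp: power3_eq_cube power2_eq_square)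
  have "rho = x"
    unfolding rho_def
  proof (rule the_equality)
    fix y :: real
    assume "0 < y \<and> y^3 + y^2 + 3*y - 1 = 0"
    with x show "y = x"
      using cubic_strict_mono[of x y] cubic_strict_mono[of y x] by (cases "x < y"; force)
  qed (use x in simp)
  with x show ?thesis
    by simp
qed

lemma rho_lower: "29/100 \<le> rho"
  and rho_upper: "rho \<le> 3/10"
  and rho_root: "rho^3 + rho^2 + 3*rho - 1 = 0"
  using rho_bounds_and_root by auto

lemma rho_pos: "0 < rho"
  using rho_lower by simp

definition Q_fps :: "real fps" where
  "Q_fps = 1 + fps_const (rho^2 + rho^3) * fps_X + fps_const (rho^3) * fps_X^2"

lemma scaled_discriminant_eq:
  "(1 - fps_const rho * fps_X)^3 - 4 * (fps_const rho * fps_X)^2 = (1 - fps_X) * Q_fps"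
proof -
  have "fps_const rho ^ 3 + fps_const rho ^ 2 + 3 * fps_const rho =
      fps_const (rho^3 + rho^2 + 3 * rho)"
    by (simp add: numeral_fps_const)
  also have "\<dots> = 1"
    using rho_root by simp
  finally have root: "fps_const rho ^ 3 + fps_const rho ^ 2 + 3 * fps_const rho = (1 :: real fps)" .
  have Q: "Q_fps = 1 + (fps_const rho ^ 2 + fps_const rho ^ 3) * fps_X + fps_const rho ^ 3 * fps_X^2"
    by (simp add: Q_fps_def)
  show ?thesis
    unfolding Q using root by algebra
qed

section \<open>The regular factor\<close>

text \<open>\<open>beta_fps\<close> is the power series of \<open>sqrt ((1 - rho z) / Q(z))\<close>. It is pinned down by
  the differential equation \<open>M \<beta>' = K \<beta>\<close> with \<open>M = (1 - rho z) Q\<close> and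
  \<open>K = - (rho Q + (1 - rho z) Q') / 2\<close>, whose coefficients are the following constants.\<close>

definition m1 :: real where "m1 = rho^2 + rho^3 - rho"

definition m2 :: real where "m2 = - (rho^4)"

definition m3 :: real where "m3 = - (rho^4)"

definition k0 :: real where "k0 = - (rho + rho^2 + rho^3) / 2"

definition k1 :: real where "k1 = - (rho^3)"

definition k2 :: real where "k2 = rho^4 / 2"

fun beta_coeff :: "nat \<Rightarrow> real" where
  "beta_coeff 0 = 1"
| "beta_coeff (Suc 0) = k0"
| "beta_coeff (Suc (Suc 0)) = ((k0 - m1) * k0 + k1) / 2"
| "beta_coeff (Suc (Suc (Suc n))) =
     ((k0 - m1 * (real n + 2)) * beta_coeff (n + 2) + (k1 - m2 * (real n + 1)) * beta_coeff (n + 1)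
      + (k2 - m3 * real n) * beta_coeff n) / (real n + 3)"

definition beta_fps :: "real fps" where
  "beta_fps = Abs_fps beta_coeff"

definition M_fps :: "real fps" where
  "M_fps = 1 + fps_const m1 * fps_X + fps_const m2 * fps_X^2 + fps_const m3 * fps_X^3"

definition K_fps :: "real fps" where
  "K_fps = fps_const k0 + fps_const k1 * fps_X + fps_const k2 * fps_X^2"

lemma beta_coeff_recurrence:
  "(real n + 4) * beta_coeff (n + 4) = (k0 - m1 * (real n + 3)) * beta_coeff (n + 3)
     + (k1 - m2 * (real n + 2)) * beta_coeff (n + 2) + (k2 - m3 * (real n + 1)) * beta_coeff (n + 1)"
proof -
  have "beta_coeff (Suc (Suc (Suc (Suc n)))) = ((k0 - m1 * (real (Suc n) + 2)) * beta_coeff (Suc n + 2)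
      + (k1 - m2 * (real (Suc n) + 1)) * beta_coeff (Suc n + 1) + (k2 - m3 * real (Suc n)) * beta_coeff (Suc n))
      / (real (Suc n) + 3)"
    by (rule beta_coeff.simps(4))
  then show ?thesis
    by (simp add: field_simps numeral_eq_Suc del: beta_coeff.simps)
qed

lemma beta_fps_ode: "M_fps * fps_deriv beta_fps = K_fps * beta_fps"
proof (rule fps_ext)
  fix n
  let ?b = beta_coeff and ?d = "fps_deriv beta_fps"
  have M: "(M_fps * ?d) $ n = ?d $ n + (if n < 1 then 0 else m1 * ?d $ (n - 1))
      + (if n < 2 then 0 else m2 * ?d $ (n - 2)) + (if n < 3 then 0 else m3 * ?d $ (n - 3))"
    using fps_const_X_power_mult_nth[of "_ :: real" 1]
    unfolding M_fps_def by (simp only: distrib_right fps_add_nth fps_const_X_power_mult_nth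
        mult_1_left power_one_right)
  have K: "(K_fps * beta_fps) $ n = k0 * ?b n + (if n < 1 then 0 else k1 * ?b (n - 1))
      + (if n < 2 then 0 else k2 * ?b (n - 2))"
    using fps_const_X_power_mult_nth[of "_ :: real" 1]
    unfolding K_fps_def by (simp only: distrib_right fps_add_nth fps_const_X_power_mult_nth
        fps_mult_left_const_nth power_one_right beta_fps_def fps_nth_Abs_fps)
  consider "n = 0" | "n = 1" | "n = 2" | j where "n = j + 3"
    by atomize_elim presburger
  then show "(M_fps * ?d) $ n = (K_fps * beta_fps) $ n"
  proof cases
    case 4
    then show ?thesis
      unfolding M K using beta_coeff_recurrence[of j]
      by (simp add: beta_fps_def algebra_simps numeral_eq_Suc del: beta_coeff.simps)
  qed (unfold M K, simp_all add: beta_fps_def numeral_eq_Suc field_simps)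
qed

lemma M_fps_eq: "M_fps = (1 - fps_const rho * fps_X) * Q_fps"
proof -
  let ?R = "fps_const rho"
  have "fps_const m1 = ?R^2 + ?R^3 - ?R" "fps_const m2 = - (?R^4)" "fps_const m3 = - (?R^4)"
    "fps_const (rho^2 + rho^3) = ?R^2 + ?R^3" "fps_const (rho^3) = ?R^3"
    by (simp_all add: m1_def m2_def m3_def)
  then show ?thesis
    unfolding M_fps_def Q_fps_def by algebra
qed

lemma K_fps_eq:
  "2 * K_fps = - fps_const rho * Q_fps - (1 - fps_const rho * fps_X) * fps_deriv Q_fps"
proof -
  let ?R = "fps_const rho" and ?H = "fps_const (1/2 :: real)"
  have "fps_const k0 = - (?R + ?R^2 + ?R^3) * ?H" "fps_const k1 = - (?R^3)" "fps_const k2 = ?R^4 * ?H"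
    "fps_const (rho^2 + rho^3) = ?R^2 + ?R^3" "fps_const (rho^3) = ?R^3" "2 * ?H = 1"
    by (simp_all add: k0_def k1_def k2_def numeral_fps_const)
  moreover have "fps_deriv Q_fps = fps_const (rho^2 + rho^3) + 2 * fps_const (rho^3) * fps_X"
    by (simp add: Q_fps_def power2_eq_square)
  ultimately show ?thesis
    unfolding K_fps_def Q_fps_def by algebra
qed

lemma beta_fps_square: "beta_fps^2 * Q_fps = 1 - fps_const rho * fps_X"
proof -
  let ?\<beta> = beta_fps and ?L = "1 - fps_const rho * fps_X"
  define V where "V = ?\<beta>^2 * Q_fps - ?L"
  have "fps_deriv V = 2 * ?\<beta> * fps_deriv ?\<beta> * Q_fps + ?\<beta>^2 * fps_deriv Q_fps + fps_const rho"
    by (simp add: V_def power2_eq_square algebra_simps)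
  moreover have "?L * (2 * ?\<beta> * fps_deriv ?\<beta> * Q_fps) = ?\<beta> * (2 * K_fps) * ?\<beta>"
    using beta_fps_ode unfolding M_fps_eq by algebra
  ultimately have "?L * fps_deriv V = - fps_const rho * V"
    unfolding V_def using K_fps_eq by algebra
  moreover have "V $ 0 = 0"
    by (simp add: V_def Q_fps_def beta_fps_def power2_eq_square)
  ultimately have "V = 0"
    using fps_linear_ode_zero[of rho V "- rho"] by simp
  then show ?thesis
    by (simp add: V_def)
qed

lemma beta_constant_bounds:
  "\<bar>k0\<bar> \<le> 21/100" "\<bar>k1\<bar> \<le> 3/100" "\<bar>k2\<bar> \<le> 1/200"
  "\<bar>m1\<bar> \<le> 1/5" "\<bar>m2\<bar> \<le> 1/100" "\<bar>m3\<bar> \<le> 1/100"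
proof -
  have "rho^2 \<le> (3/10)^2" "rho^3 \<le> (3/10)^3" "rho^4 \<le> (3/10)^4"
    "(29/100)^2 \<le> rho^2" "(29/100)^3 \<le> rho^3"
    using rho_lower rho_upper rho_pos by (intro power_mono; simp)+
  then have pw: "rho^2 \<le> 9/100" "rho^3 \<le> 27/1000" "rho^4 \<le> 81/10000"
    "841/10000 \<le> rho^2" "24389/1000000 \<le> rho^3" "0 \<le> rho^4"
    using rho_pos by (simp_all add: power_numeral_reduce del: power_numeral)
  note rho = rho_lower rho_upper pw
  show "\<bar>k0\<bar> \<le> 21/100" unfolding k0_def abs_le_iff using rho by (simp add: field_simps; linarith)
  show "\<bar>k1\<bar> \<le> 3/100" unfolding k1_def abs_le_iff using rho by linarith
  show "\<bar>k2\<bar> \<le> 1/200" unfolding k2_def abs_le_iff using rho by (simp add: field_simps; linarith)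
  show "\<bar>m1\<bar> \<le> 1/5" unfolding m1_def abs_le_iff using rho by linarith
  show "\<bar>m2\<bar> \<le> 1/100" unfolding m2_def abs_le_iff using rho by linarith
  show "\<bar>m3\<bar> \<le> 1/100" unfolding m3_def abs_le_iff using rho by linarith
qed

lemma beta_recurrence_step_bound:
  fixes x t u0 u1 u2 :: real
  assumes "0 \<le> x" "0 \<le> t"
    and "\<bar>u2\<bar> \<le> t * (9/20)^2" "\<bar>u1\<bar> \<le> t * (9/20)" "\<bar>u0\<bar> \<le> t"
  shows "\<bar>(k0 - m1 * (x + 2)) * u2 + (k1 - m2 * (x + 1)) * u1 + (k2 - m3 * x) * u0\<bar>
    \<le> (x + 3) * (t * (9/20)^3)"
proof -
  note bounds = beta_constant_bounds
  have A: "\<bar>k0 - m1 * (x + 2)\<bar> \<le> 21/100 + 1/5 * (x + 2)"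
    using bounds assms(1) by (intro abs_diff_mult_le) auto
  have B: "\<bar>k1 - m2 * (x + 1)\<bar> \<le> 3/100 + 1/100 * (x + 1)"
    using bounds assms(1) by (intro abs_diff_mult_le) auto
  have C: "\<bar>k2 - m3 * x\<bar> \<le> 1/200 + 1/100 * x"
    using bounds assms(1) by (intro abs_diff_mult_le) auto
  have "\<bar>(k0 - m1 * (x + 2)) * u2 + (k1 - m2 * (x + 1)) * u1 + (k2 - m3 * x) * u0\<bar>
      \<le> \<bar>k0 - m1 * (x + 2)\<bar> * \<bar>u2\<bar> + \<bar>k1 - m2 * (x + 1)\<bar> * \<bar>u1\<bar> + \<bar>k2 - m3 * x\<bar> * \<bar>u0\<bar>"
    unfolding abs_mult [symmetric]
    by (rule abs_triangle_ineq[THEN order_trans]) (simp add: abs_triangle_ineq)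
  also have "\<dots> \<le> (21/100 + 1/5 * (x + 2)) * (t * (9/20)^2) + (3/100 + 1/100 * (x + 1)) * (t * (9/20))
      + (1/200 + 1/100 * x) * t"
    using assms by (intro add_mono mult_mono A B C) auto
  also have "\<dots> \<le> (x + 3) * (t * (9/20)^3)"
  proof -
    have "(21/100 + 1/5 * (x + 2)) * (9/20)^2 + (3/100 + 1/100 * (x + 1)) * (9/20)
        + (1/200 + 1/100 * x) \<le> (x + 3) * (9/20 :: real)^3"
      using assms(1) by (simp add: power_numeral_reduce field_simps)
    from mult_right_mono[OF this assms(2)] show ?thesis
      by (simp add: algebra_simps)
  qed
  finally show ?thesis .
qed

lemma beta_coeff_bound: "\<bar>beta_coeff n\<bar> \<le> (9/20)^n"
proof (induction n rule: beta_coeff.induct)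
  case 2
  then show ?case
    using beta_constant_bounds by simp
next
  case 3
  have "\<bar>(k0 - m1) * k0 + k1\<bar> \<le> (21/100 + 1/5) * (21/100) + 3/100"
  proof -
    have "\<bar>k0 - m1\<bar> \<le> 21/100 + 1/5"
      using beta_constant_bounds by linarith
    then have "\<bar>(k0 - m1) * k0\<bar> \<le> (21/100 + 1/5) * (21/100)"
      unfolding abs_mult using beta_constant_bounds by (intro mult_mono) auto
    then show ?thesis
      using beta_constant_bounds abs_triangle_ineq[of "(k0 - m1) * k0" k1] by linarith
  qed
  then show ?case
    by (simp add: power2_eq_square)
next
  case (4 n)
  let ?S = "(k0 - m1 * (real n + 2)) * beta_coeff (n + 2) + (k1 - m2 * (real n + 1)) * beta_coeff (n + 1)
      + (k2 - m3 * real n) * beta_coeff n"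
  have "\<bar>beta_coeff (n + 2)\<bar> \<le> (9/20)^n * (9/20)^2" "\<bar>beta_coeff (n + 1)\<bar> \<le> (9/20)^n * (9/20)"
    using "4.IH"(1,2) by (simp_all only: power_add power_one_right)
  then have "\<bar>?S\<bar> \<le> (real n + 3) * ((9/20)^n * (9/20)^3)"
    using "4.IH"(3) by (intro beta_recurrence_step_bound) simp_all
  have "\<bar>beta_coeff (Suc (Suc (Suc n)))\<bar> = \<bar>?S\<bar> / (real n + 3)"
    by simp
  also have "\<dots> \<le> (9/20)^n * (9/20)^3"
    using \<open>\<bar>?S\<bar> \<le> _\<close> by (simp add: divide_le_eq mult.commute)
  also have "\<dots> = (9/20)^(Suc (Suc (Suc n)))"
    by (simp add: power3_eq_cube)
  finally show ?case .
qed simp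

lemma summable_beta_coeff_double: "summable (\<lambda>n. \<bar>beta_coeff n\<bar> * 2 ^ n)"
proof (rule summable_comparison_test'[OF summable_geometric[of "9/10 :: real"]])
  fix n
  have "\<bar>beta_coeff n\<bar> * 2 ^ n \<le> (9/20) ^ n * 2 ^ n"
    by (rule mult_right_mono[OF beta_coeff_bound]) simp
  also have "(9/20) ^ n * 2 ^ n = (9/10 :: real) ^ n"
    by (subst power_mult_distrib [symmetric]) simp
  finally show "norm (\<bar>beta_coeff n\<bar> * 2 ^ n) \<le> (9/10) ^ n"
    by simp
qed simp

lemma beta_fps_conv_radius: "1 < fps_conv_radius beta_fps"
proof -
  have "summable (\<lambda>n. \<bar>beta_coeff n * 2 ^ n\<bar>)"
    using summable_beta_coeff_double by (simp add: abs_mult)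
  then have "summable (\<lambda>n. beta_coeff n * 2 ^ n)"
    by (rule summable_rabs_cancel)
  then have radius: "ereal (norm (2 :: real)) \<le> fps_conv_radius beta_fps"
    unfolding fps_conv_radius_def beta_fps_def fps_nth_Abs_fps by (rule conv_radius_geI)
  show ?thesis
    using less_le_trans[OF _ radius, of 1] by simp
qed

lemma eval_beta_fps_nonzero: "eval_fps beta_fps 1 \<noteq> 0"
proof -
  have Q: "Q_fps = fps_of_poly [:1, rho^2 + rho^3, rho^3:]"
    by (simp add: Q_fps_def fps_of_poly_pCons algebra_simps power2_eq_square)
  have L: "1 - fps_const rho * fps_X = fps_of_poly [:1, - rho:]"
    by (simp add: fps_of_poly_pCons)
  have r1: "ereal (norm (1 :: real)) < fps_conv_radius beta_fps"
    using beta_fps_conv_radius by (simp add: one_ereal_def)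
  then have "ereal (norm (1 :: real)) < fps_conv_radius (beta_fps^2)"
    using fps_conv_radius_power[of beta_fps 2] by (rule less_le_trans)
  then have "eval_fps (beta_fps^2 * Q_fps) 1 = eval_fps beta_fps 1 ^ 2 * poly [:1, rho^2 + rho^3, rho^3:] 1"
    unfolding Q by (simp add: eval_fps_mult eval_fps_power[OF r1])
  then have "eval_fps beta_fps 1 ^ 2 * poly [:1, rho^2 + rho^3, rho^3:] 1 = poly [:1, - rho:] 1"
    unfolding beta_fps_square L by simp
  then show ?thesis
    using rho_upper by auto
qed

section \<open>Coefficient asymptotics\<close>

lemma scaled_hole_gf: "hole_gf oo (fps_const rho * fps_X) = invsqrt_fps * beta_fps"
proof -
  let ?c = "fps_const rho * fps_X"
  let ?H = "hole_gf oo ?c" and ?G = "invsqrt_fps * beta_fps" and ?P = "(1 - fps_X) * Q_fps"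
  have c0: "?c $ 0 = 0"
    by simp
  have "(hole_gf^2 * ((1 - fps_X)^3 - 4 * fps_X^2)) oo ?c = (1 - fps_X) oo ?c"
    by (simp only: hole_gf_square)
  then have "?H^2 * ((1 - ?c)^3 - 4 * ?c^2) = 1 - ?c"
    by (simp only: fps_compose_mult_distrib[OF c0] fps_compose_sub_distrib
        fps_compose_power[OF c0, symmetric] fps_X_fps_compose_startby0[OF c0]
        fps_compose_1 numeral_compose)
  then have "?H^2 * ?P = (invsqrt_fps^2 * (1 - fps_X)) * (beta_fps^2 * Q_fps)"
    by (simp only: scaled_discriminant_eq invsqrt_fps_square beta_fps_square mult_1_left)
  also have "\<dots> = ?G^2 * ?P"
    by algebra
  finally have "?H^2 = ?G^2"
    by (rule mult_right_cancel[THEN iffD1, rotated]) (auto simp: fps_eq_iff Q_fps_def intro: exI[of _ 0])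
  then have "(?H - ?G) * (?H + ?G) = 0"
    by algebra
  moreover have "(?H + ?G) $ 0 \<noteq> 0"
    using hole_gf_nth_nonneg[of 0] by (simp add: invsqrt_fps_nth beta_fps_def)
  then have "?H + ?G \<noteq> 0"
    by (metis fps_zero_nth)
  ultimately show ?thesis
    by simp
qed

lemma hole_gf_asymptotic:
  "(\<lambda>n. hole_gf $ n / (invsqrt_fps $ n / rho ^ n)) \<longlonglongrightarrow> eval_fps beta_fps 1"
proof -
  have "(\<lambda>n. (\<Sum>k\<le>n. beta_coeff k * invsqrt_fps $ (n - k)) / invsqrt_fps $ n) \<longlonglongrightarrow> suminf beta_coeff"
    using invsqrt_fps_nth_pos invsqrt_fps_ratio invsqrt_fps_shift_le summable_beta_coeff_double
    by (rule convolution_quotient_tendsto)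
  moreover have "(\<Sum>k\<le>n. beta_coeff k * invsqrt_fps $ (n - k)) = rho ^ n * hole_gf $ n" for n
    using arg_cong[OF scaled_hole_gf, of "\<lambda>f. f $ n"]
    by (simp add: mult.commute[of invsqrt_fps] fps_mult_nth atLeast0AtMost beta_fps_def)
  moreover have "suminf beta_coeff = eval_fps beta_fps 1"
    by (simp add: eval_fps_def beta_fps_def)
  ultimately show ?thesis
    by (simp add: field_simps)
qed

lemma eval_beta_fps_pos: "0 < eval_fps beta_fps 1"
proof -
  have "\<forall>n. 0 \<le> hole_gf $ n / (invsqrt_fps $ n / rho ^ n)"
    using hole_gf_nth_nonneg invsqrt_fps_nth_pos rho_pos by (simp add: less_imp_le)
  then have "0 \<le> eval_fps beta_fps 1"
    by (intro LIMSEQ_le_const[OF hole_gf_asymptotic]) blast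
  with eval_beta_fps_nonzero show ?thesis
    by simp
qed

lemma hole_gf_eventually_pos: "eventually (\<lambda>n. 0 < hole_gf $ n) sequentially"
  using order_tendstoD(1)[OF hole_gf_asymptotic eval_beta_fps_pos]
proof eventually_elim
  case (elim n)
  with invsqrt_fps_nth_pos[of n] rho_pos show ?case
    by (simp add: zero_less_divide_iff zero_less_mult_iff)
qed

lemma hole_gf_ratio: "(\<lambda>n. hole_gf $ n / hole_gf $ Suc n) \<longlonglongrightarrow> rho"
proof (rule quotient_ratio_tendsto[OF hole_gf_asymptotic])
  show "eval_fps beta_fps 1 \<noteq> 0"
    by (rule eval_beta_fps_nonzero)
  show "invsqrt_fps $ n / rho ^ n \<noteq> 0" for n
    using invsqrt_fps_nth_pos[of n] rho_pos by simp
  have "(\<lambda>n. invsqrt_fps $ n / invsqrt_fps $ Suc n * rho) \<longlonglongrightarrow> 1 * rho"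
    by (intro tendsto_mult invsqrt_fps_ratio tendsto_const)
  then show "(\<lambda>n. invsqrt_fps $ n / rho ^ n / (invsqrt_fps $ Suc n / rho ^ Suc n)) \<longlonglongrightarrow> rho"
    using rho_pos by (simp add: field_simps)
qed

theorem mainTheorem5:
  fixes m :: nat
  shows "(\<lambda>n. probX n m) \<longlonglongrightarrow> (1 - rho) * rho ^ m"
proof (rule LIMSEQ_offset[where k = "Suc m"])
  have "(\<lambda>n. hole_gf $ n / (\<Sum>k\<le>n + m. hole_gf $ k)) \<longlonglongrightarrow> (1 - rho) * rho ^ m"
    using hole_gf_eventually_pos hole_gf_ratio rho_pos rho_upper
    by (intro geometric_share_tendsto) simp_all
  then show "(\<lambda>n. probX (n + Suc m) m) \<longlonglongrightarrow> (1 - rho) * rho ^ m"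
    by (simp add: probX_eq_hole_gf)
qed

end
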